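(* For every $m\in\mathbb{N}$ and every $0<\varepsilon<1$, the set $E_\varepsilon$ is a convex subset of $\mathbb{C}^m$.
   Context: For $m\in\mathbb{N}$ let $\xi_j=e^{(2j-1)\pi i/m}$, $j=1,\dots,m$ (the $m$-th roots of $-1$ in counterclockwise order), with $\xi_{m+1}:=\xi_1$. For $\varepsilon>0$ define \[E_\varepsilon=\Big\{(r_1,\dots,r_m)\in\prod_{j=1}^m\exp(\overline{D}(0,\varepsilon)) : \tfrac{r_{j+1}\xi_{j+1}-r_j\xi_j}{\xi_{j+1}-\xi_j}\in\exp(\overline{D}(0,\varepsilon)),\ 1\le j\le m\Big\},\] with $r_{m+1}:=r_1$, where $\exp(\overline D(0,\varepsilon))=\{e^{u}:|u|\le\varepsilon\}$. *)

theory Defs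
  imports "HOL-Analysis.Analysis"
begin

text \<open>Points of C^m are represented as functions r :: nat \<Rightarrow> complex, with coordinate
  r j (0-based, j < m) standing for the paper's r_(j+1); coordinates j \<ge> m are required to be 0.\<close>

definition expDisc :: "real \<Rightarrow> complex set" where
  "expDisc \<epsilon> = exp ` cball 0 \<epsilon>"

text \<open>xi m j = e^((2(j+1)-1) pi i / m), the paper's xi_(j+1); indices are taken mod m.\<close>
definition xi :: "nat \<Rightarrow> nat \<Rightarrow> complex" where
  "xi m j = exp (complex_of_real ((2 * real (j mod m) + 1) * pi / real m) * \<i>)"

definition E_set :: "nat \<Rightarrow> real \<Rightarrow> (nat \<Rightarrow> complex) set" where
  "E_set m \<epsilon> = {r. (\<forall>j\<ge>m. r j = 0) \<and> (\<forall>j<m. r j \<in> expDisc \<epsilon>) \<and>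
     (\<forall>j<m. (r ((j+1) mod m) * xi m (j+1) - r j * xi m j) / (xi m (j+1) - xi m j) \<in> expDisc \<epsilon>)}"

definition convex_Cm :: "(nat \<Rightarrow> complex) set \<Rightarrow> bool" where
  "convex_Cm S \<longleftrightarrow> (\<forall>x\<in>S. \<forall>y\<in>S. \<forall>u::real. \<forall>v::real. 0 \<le> u \<longrightarrow> 0 \<le> v \<longrightarrow> u + v = 1 \<longrightarrow>
     (\<lambda>j. of_real u * x j + of_real v * y j) \<in> S)"

end

theory Submission
  imports Defs
begin

text \<open>The half-plane \<open>Re z \<ge> 1/e\<close> contains \<open>exp\<close> of the closed unit disc, and on it
  \<open>|Ln z|\<^sup>2\<close> is quasiconvex along segments. Writing \<open>w(s) = p + s d\<close>, the derivative of
  \<open>|Ln w|\<^sup>2\<close> is \<open>2 G / |w|\<^sup>2\<close> with \<open>G = Re (conj (w Ln w) d)\<close>, and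
  \<open>G' = |d|\<^sup>2 (1 + ln |w|) \<ge> 0\<close>. So \<open>G\<close> changes sign at most once, from negative to positive,
  and \<open>|Ln w(s)|\<close> never exceeds its value at an endpoint: \<open>exp\<close> maps every disc of radius at
  most 1 onto a convex set. The defining conditions of \<open>E\<^sub>\<epsilon>\<close> put complex-linear images of a
  point into this convex set, so \<open>E\<^sub>\<epsilon>\<close> is convex.\<close>

lemma cos_ge_one_minus_square_half: "1 - x\<^sup>2 / 2 \<le> cos (x::real)"
proof -
  have "cos x = 1 - 2 * sin (x / 2) ^ 2"
    using cos_double_sin[of "x / 2"] by simp
  moreover have "sin (x / 2) ^ 2 \<le> (x / 2) ^ 2"
    by (rule abs_le_square_iff[THEN iffD1, OF abs_sin_x_le_abs_x])
  ultimately show ?thesis by (simp add: power_divide)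
qed

lemma exp_minus_le_quadratic:
  assumes "0 \<le> (x::real)"
  shows "exp (- x) \<le> 1 - x + x\<^sup>2 / 2"
proof -
  have nonneg: "0 \<le> 1 - x + x\<^sup>2 / 2"
    using zero_le_power2[of "x - 1"] by (simp add: power2_diff)
  have "1 \<le> 1 + x ^ 4 / 4" by simp
  also have "\<dots> = (1 + x + x\<^sup>2 / 2) * (1 - x + x\<^sup>2 / 2)"
    by (simp add: algebra_simps power2_eq_square power4_eq_xxxx)
  also have "\<dots> \<le> exp x * (1 - x + x\<^sup>2 / 2)"
    using exp_lower_Taylor_quadratic[OF assms] nonneg by (rule mult_right_mono)
  finally show ?thesis by (simp add: exp_minus field_simps)
qed

lemma exp_minus_one_le_Re_exp:
  fixes a :: complex
  assumes "norm a \<le> 1"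
  shows "exp (-1) \<le> Re (exp a)"
proof -
  define x y where "x = Re a" and "y = Im a"
  have xy: "x\<^sup>2 + y\<^sup>2 \<le> 1"
    using assms by (simp add: x_def y_def cmod_power2[symmetric] abs_square_le_1)
  define c where "c = sqrt (1 - y\<^sup>2)"
  have "y\<^sup>2 \<le> 1"
    using xy zero_le_power2[of x] by linarith
  then have c: "0 \<le> c" "c \<le> 1" "c\<^sup>2 = 1 - y\<^sup>2"
    by (auto simp: c_def)
  have "x\<^sup>2 \<le> c\<^sup>2" using xy c by simp
  then have "- c \<le> x"
    using c power2_le_iff_abs_le[of c x] by linarith
  have "exp (c - 1) \<le> 1 - (1 - c) + (1 - c)\<^sup>2 / 2"
    using exp_minus_le_quadratic[of "1 - c"] c by simp
  also have "\<dots> = 1 - y\<^sup>2 / 2"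
    using c by (simp add: power2_diff field_simps)
  also have "\<dots> \<le> cos y" by (rule cos_ge_one_minus_square_half)
  finally have "exp (c - 1) \<le> cos y" .
  have "exp (-1) = exp (- c) * exp (c - 1)" by (simp flip: exp_add)
  also have "\<dots> \<le> exp x * cos y"
    using \<open>- c \<le> x\<close> \<open>exp (c - 1) \<le> cos y\<close> by (intro mult_mono) auto
  also have "\<dots> = Re (exp a)" by (simp add: Re_exp x_def y_def)
  finally show ?thesis .
qed

lemma has_real_derivative_Re:
  "(f has_vector_derivative f') F \<Longrightarrow> ((\<lambda>x. Re (f x)) has_real_derivative Re f') F"
  unfolding has_real_derivative_iff_has_vector_derivative
  by (rule bounded_linear.has_vector_derivative[OF bounded_linear_Re])

lemma le_max_endpoints_if_deriv_sign_mono: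
  fixes g G c :: "real \<Rightarrow> real"
  assumes t: "a \<le> t" "t \<le> b"
    and deriv: "\<And>s. a \<le> s \<Longrightarrow> s \<le> b \<Longrightarrow> (g has_real_derivative c s * G s) (at s)"
    and pos: "\<And>s. a \<le> s \<Longrightarrow> s \<le> b \<Longrightarrow> 0 < c s"
    and mono: "mono_on {a..b} G"
  shows "g t \<le> max (g a) (g b)"
proof (cases "G t \<le> 0")
  case True
  have "g t \<le> g a"
  proof (rule DERIV_nonpos_imp_nonincreasing[OF t(1)])
    fix s assume s: "a \<le> s" "s \<le> t"
    with t True mono have "G s \<le> 0" by (smt (verit) atLeastAtMost_iff mono_onD)
    with s t pos[of s] have "c s * G s \<le> 0" by (simp add: mult_nonneg_nonpos)
    with s t deriv[of s] show "\<exists>y. (g has_real_derivative y) (at s) \<and> y \<le> 0" by auto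
  qed
  then show ?thesis by simp
next
  case False
  have "g t \<le> g b"
  proof (rule DERIV_nonneg_imp_nondecreasing[OF t(2)])
    fix s assume s: "t \<le> s" "s \<le> b"
    with t False mono have "0 \<le> G s" by (smt (verit) atLeastAtMost_iff mono_onD)
    with s t pos[of s] have "0 \<le> c s * G s" by simp
    with s t deriv[of s] show "\<exists>y. (g has_real_derivative y) (at s) \<and> 0 \<le> y" by auto
  qed
  then show ?thesis by simp
qed

lemma Re_segment_ge:
  fixes p q :: complex
  assumes "c \<le> Re p" "c \<le> Re q" "0 \<le> t" "t \<le> 1"
  shows "c \<le> Re ((1 - t) *\<^sub>R p + t *\<^sub>R q)"
proof -
  have "c = (1 - t) * c + t * c" by algebra
  also have "\<dots> \<le> (1 - t) * Re p + t * Re q"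
    using assms by (intro add_mono mult_left_mono) auto
  finally show ?thesis by simp
qed

lemma norm_Ln_segment_le_max:
  assumes p: "exp (-1) \<le> Re p" and q: "exp (-1) \<le> Re q" and t: "0 \<le> t" "t \<le> 1"
  shows "norm (Ln ((1 - t) *\<^sub>R p + t *\<^sub>R q)) \<le> max (norm (Ln p)) (norm (Ln q))"
proof -
  define d where "d = q - p"
  define w where "w s = p + of_real s * d" for s :: real
  define g where "g s = (norm (Ln (w s)))\<^sup>2" for s
  define G where "G s = Re (cnj (w s * Ln (w s)) * d)" for s
  have w_eq: "w s = (1 - s) *\<^sub>R p + s *\<^sub>R q" for s
    by (simp add: w_def d_def scaleR_conv_of_real algebra_simps)
  have Re_w: "exp (-1) \<le> Re (w s)" if "0 \<le> s" "s \<le> 1" for s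
    unfolding w_eq using p q that by (rule Re_segment_ge)
  have w_pos: "0 < Re (w s)" if "0 \<le> s" "s \<le> 1" for s
    using Re_w[OF that] exp_gt_zero less_le_trans by blast
  then have w_nz: "w s \<noteq> 0" if "0 \<le> s" "s \<le> 1" for s
    using that by fastforce
  have Re_Ln_w: "-1 \<le> Re (Ln (w s))" if "0 \<le> s" "s \<le> 1" for s
  proof -
    have "exp (-1) \<le> norm (w s)"
      using Re_w[OF that] complex_Re_le_cmod order_trans by blast
    then have "-1 \<le> ln (norm (w s))"
      by (metis exp_gt_zero less_le_trans ln_ge_iff)
    then show ?thesis using w_nz[OF that] by simp
  qed
  have dw: "(w has_vector_derivative d) (at s)" for s
    unfolding w_def by (auto intro!: derivative_eq_intros)
  have d_Ln_w: "((\<lambda>s. Ln (w s)) has_vector_derivative d / w s) (at s)" if "0 \<le> s" "s \<le> 1" for s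
  proof -
    have "(Ln has_field_derivative inverse (w s)) (at (w s))"
      using w_pos[OF that] by (intro has_field_derivative_Ln) (auto simp: complex_nonpos_Reals_iff)
    then show ?thesis
      using field_vector_diff_chain_at[OF dw] by (fastforce simp: o_def divide_inverse)
  qed
  have dg: "(g has_real_derivative 2 / (norm (w s))\<^sup>2 * G s) (at s)" if "0 \<le> s" "s \<le> 1" for s
  proof -
    have "g = (\<lambda>s. Re (Ln (w s) * cnj (Ln (w s))))"
      by (simp add: g_def fun_eq_iff complex_mult_cnj cmod_power2)
    moreover have "((\<lambda>s. Re (Ln (w s) * cnj (Ln (w s)))) has_real_derivative
        Re (Ln (w s) * cnj (d / w s) + d / w s * cnj (Ln (w s)))) (at s)"
      using has_vector_derivative_mult[OF d_Ln_w has_vector_derivative_cnj[OF d_Ln_w]] that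
      by (intro has_real_derivative_Re)
    moreover have "Re (Ln (w s) * cnj (d / w s) + d / w s * cnj (Ln (w s))) = 2 / (norm (w s))\<^sup>2 * G s"
      by (simp add: G_def complex_div_cnj[of d] add_divide_distrib diff_divide_distrib algebra_simps)
    ultimately show ?thesis by simp
  qed
  have dG: "(G has_real_derivative (norm d)\<^sup>2 * (1 + Re (Ln (w s)))) (at s)" if "0 \<le> s" "s \<le> 1" for s
  proof -
    from has_vector_derivative_mult[OF dw d_Ln_w[OF that]]
    have "((\<lambda>s. w s * Ln (w s)) has_vector_derivative d * (1 + Ln (w s))) (at s)"
      using w_nz[OF that] by (simp add: algebra_simps)
    from has_real_derivative_Re[OF has_vector_derivative_mult_left[where a = d, OF has_vector_derivative_cnj[OF this]]]
    have "(G has_real_derivative Re (cnj (d * (1 + Ln (w s))) * d)) (at s)"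
      unfolding G_def[abs_def] .
    moreover have "cnj (d * (1 + Ln (w s))) * d = (norm d)\<^sup>2 *\<^sub>R (1 + cnj (Ln (w s)))"
      using complex_norm_square[of d] by (simp add: scaleR_conv_of_real mult_ac)
    then have "Re (cnj (d * (1 + Ln (w s))) * d) = (norm d)\<^sup>2 * (1 + Re (Ln (w s)))"
      by simp
    ultimately show ?thesis by (simp only:)
  qed
  have "mono_on {0..1} G"
  proof (rule mono_onI)
    fix u v :: real assume "u \<in> {0..1}" "v \<in> {0..1}" "u \<le> v"
    then show "G u \<le> G v"
    proof (intro DERIV_nonneg_imp_nondecreasing[OF \<open>u \<le> v\<close>])
      fix s assume "u \<le> s" "s \<le> v"
      with \<open>u \<in> {0..1}\<close> \<open>v \<in> {0..1}\<close> have s: "0 \<le> s" "s \<le> 1" by auto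
      have "0 \<le> (norm d)\<^sup>2 * (1 + Re (Ln (w s)))"
        using Re_Ln_w[OF s] by simp
      with dG[OF s] show "\<exists>y. (G has_real_derivative y) (at s) \<and> 0 \<le> y" by blast
    qed
  qed
  then have "g t \<le> max (g 0) (g 1)"
    using t dg by (intro le_max_endpoints_if_deriv_sign_mono[where c = "\<lambda>s. 2 / (norm (w s))\<^sup>2"])
      (auto dest!: w_pos)
  then have "(norm (Ln (w t)))\<^sup>2 \<le> max ((norm (Ln p))\<^sup>2) ((norm (Ln q))\<^sup>2)"
    by (simp add: g_def w_eq)
  then show ?thesis
    unfolding w_eq by (smt (verit) norm_ge_zero power2_le_imp_le)
qed

lemma convex_exp_cball:
  assumes "\<epsilon> \<le> 1"
  shows "convex (exp ` cball (0::complex) \<epsilon>)"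
  unfolding convex_alt
proof (intro ballI allI impI)
  fix x y :: complex and u :: real
  assume "x \<in> exp ` cball 0 \<epsilon>" "y \<in> exp ` cball 0 \<epsilon>" and u: "0 \<le> u \<and> u \<le> 1"
  then obtain a b where ab: "x = exp a" "y = exp b" "norm a \<le> \<epsilon>" "norm b \<le> \<epsilon>"
    by auto
  have Ln_exp_eq: "Ln (exp c) = c" if "norm c \<le> \<epsilon>" for c
    using abs_Im_le_cmod[of c] that assms pi_gt3 by (intro Ln_exp) auto
  have Re_ge: "exp (-1) \<le> Re x" "exp (-1) \<le> Re y"
    using ab assms by (auto intro: exp_minus_one_le_Re_exp)
  define z where "z = (1 - u) *\<^sub>R x + u *\<^sub>R y"
  have "exp (-1) \<le> Re z"
    unfolding z_def using Re_ge u by (intro Re_segment_ge) auto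
  then have "z \<noteq> 0"
    using exp_gt_zero[of "-1"] by (metis linorder_not_less zero_complex.sel(1))
  have "norm (Ln z) \<le> max (norm a) (norm b)"
    using norm_Ln_segment_le_max[OF Re_ge, of u] u ab Ln_exp_eq by (simp add: z_def)
  then have "Ln z \<in> cball 0 \<epsilon>"
    using ab by simp
  then have "z \<in> exp ` cball 0 \<epsilon>"
    using \<open>z \<noteq> 0\<close> by (metis exp_Ln image_eqI)
  then show "(1 - u) *\<^sub>R x + u *\<^sub>R y \<in> exp ` cball 0 \<epsilon>"
    by (simp add: z_def)
qed

lemma convex_Cm_E_set:
  assumes "convex (expDisc \<epsilon>)"
  shows "convex_Cm (E_set m \<epsilon>)"
  unfolding convex_Cm_def
proof (intro ballI allI impI)
  fix x y :: "nat \<Rightarrow> complex" and u v :: real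
  assume x: "x \<in> E_set m \<epsilon>" and y: "y \<in> E_set m \<epsilon>" and uv: "0 \<le> u" "0 \<le> v" "u + v = 1"
  have comb: "of_real u * a + of_real v * b \<in> expDisc \<epsilon>"
    if "a \<in> expDisc \<epsilon>" "b \<in> expDisc \<epsilon>" for a b
    using convexD[OF assms that uv] by (simp add: scaleR_conv_of_real)
  define z where "z j = of_real u * x j + of_real v * y j" for j
  define L where "L j r = (r ((j + 1) mod m) * xi m (j + 1) - r j * xi m j) / (xi m (j + 1) - xi m j)"
    for j and r :: "nat \<Rightarrow> complex"
  have L_z: "L j z = of_real u * L j x + of_real v * L j y" for j
    by (simp add: L_def z_def diff_divide_distrib add_divide_distrib algebra_simps)
  have "L j z \<in> expDisc \<epsilon>" if "j < m" for j
  proof -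
    have "L j x \<in> expDisc \<epsilon>" "L j y \<in> expDisc \<epsilon>"
      using x y that by (auto simp: E_set_def L_def)
    then show ?thesis
      unfolding L_z by (rule comb)
  qed
  moreover have "z j \<in> expDisc \<epsilon>" if "j < m" for j
    using x y that comb by (auto simp: E_set_def z_def)
  moreover have "z j = 0" if "m \<le> j" for j
    using x y that by (simp add: E_set_def z_def)
  ultimately show "(\<lambda>j. of_real u * x j + of_real v * y j) \<in> E_set m \<epsilon>"
    unfolding E_set_def by (simp add: z_def[abs_def] L_def)
qed

theorem lemma3p5:
  fixes m :: nat and \<epsilon> :: real
  assumes "0 < m" and "0 < \<epsilon>" and "\<epsilon> < 1"
  shows "convex_Cm (E_set m \<epsilon>)"
  using convex_exp_cball[of \<epsilon>] assms(3) by (intro convex_Cm_E_set) (simp add: expDisc_def)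

end
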